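(* Let $K$ be a solid cone in a vector space with convergence $(Y,\to)$. Then its interior $K^\circ$ satisfies: (i) $\lambda K^\circ\subseteq K^\circ$ for every $\lambda>0$; (ii) $K+K^\circ\subseteq K^\circ$; (iii) $0\notin K^\circ$. Conversely, if $V$ is a nonempty open subset of $K$ satisfying (i)–(iii) (with $K^\circ$ replaced by $V$), then $V$ is the interior of $K$.
   Context: Vector space with convergence: a real vector space $Y$ with a relation $\to$ between sequences in $Y$ and points of $Y$ (write $x_n\to x$; uniqueness of limits not assumed) such that (C1) $x_n\to x$, $y_n\to y$ imply $x_n+y_n\to x+y$; (C2) $x_n\to x$, $\lambda\in\mathbb R$ imply $\lambda x_n\to\lambda x$; (C3) $\lambda_n\to\lambda$ in $\mathbb R$, $x\in Y$ imply $\lambda_n x\to\lambda x$. A set $A\subseteq Y$ is open if $x_n\to x\in A$ implies $x_n\in A$ for all but finitely many $n$; closed if $x_n\to x$ and $x_n\in A$ for all $n$ imply $x\in A$. The interior $A^\circ$ is the union of all open subsets of $Y$ contained in $A$. A cone is a nonempty closed $K\subseteq Y$ with $\lambda K\subseteq K$ for all $\lambda\ge0$, $K+K\subseteq K$, $K\cap(-K)=\{0\}$; it is solid if $K\neq\{0\}$ and $K^\circ\neq\emptyset$. *)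

theory Defs
  imports Main "HOL-Analysis.Analysis"
begin

text \<open>Uniqueness of limits is not assumed.\<close>

definition vs_conv :: "((nat \<Rightarrow> 'a::real_vector) \<Rightarrow> 'a \<Rightarrow> bool) \<Rightarrow> bool" where
  "vs_conv conv \<longleftrightarrow>
     (\<forall>x y a b. conv x a \<longrightarrow> conv y b \<longrightarrow> conv (\<lambda>n. x n + y n) (a + b)) \<and>
     (\<forall>x a (c::real). conv x a \<longrightarrow> conv (\<lambda>n. c *\<^sub>R x n) (c *\<^sub>R a)) \<and>
     (\<forall>(l::nat \<Rightarrow> real) c z. l \<longlonglongrightarrow> c \<longrightarrow> conv (\<lambda>n. l n *\<^sub>R z) (c *\<^sub>R z))"

definition conv_open :: "((nat \<Rightarrow> 'a) \<Rightarrow> 'a \<Rightarrow> bool) \<Rightarrow> 'a set \<Rightarrow> bool" where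
  "conv_open conv A \<longleftrightarrow>
     (\<forall>x a. conv x a \<longrightarrow> a \<in> A \<longrightarrow> (\<forall>\<^sub>F n in sequentially. x n \<in> A))"

definition conv_closed :: "((nat \<Rightarrow> 'a) \<Rightarrow> 'a \<Rightarrow> bool) \<Rightarrow> 'a set \<Rightarrow> bool" where
  "conv_closed conv A \<longleftrightarrow> (\<forall>x a. conv x a \<longrightarrow> (\<forall>n. x n \<in> A) \<longrightarrow> a \<in> A)"

definition conv_interior :: "((nat \<Rightarrow> 'a) \<Rightarrow> 'a \<Rightarrow> bool) \<Rightarrow> 'a set \<Rightarrow> 'a set" where
  "conv_interior conv A = \<Union>{U. conv_open conv U \<and> U \<subseteq> A}"

definition conv_cone :: "((nat \<Rightarrow> 'a::real_vector) \<Rightarrow> 'a \<Rightarrow> bool) \<Rightarrow> 'a set \<Rightarrow> bool" where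
  "conv_cone conv K \<longleftrightarrow> K \<noteq> {} \<and> conv_closed conv K \<and>
     (\<forall>(c::real) x. c \<ge> 0 \<longrightarrow> x \<in> K \<longrightarrow> c *\<^sub>R x \<in> K) \<and>
     (\<forall>x y. x \<in> K \<longrightarrow> y \<in> K \<longrightarrow> x + y \<in> K) \<and>
     K \<inter> uminus ` K = {0}"

definition solid_cone :: "((nat \<Rightarrow> 'a::real_vector) \<Rightarrow> 'a \<Rightarrow> bool) \<Rightarrow> 'a set \<Rightarrow> bool" where
  "solid_cone conv K \<longleftrightarrow> conv_cone conv K \<and> K \<noteq> {0} \<and> conv_interior conv K \<noteq> {}"

end

theory Submission
  imports Defs
begin

(* Open sets are preserved by the maps x \<mapsto> c x (c \<noteq> 0) and x \<mapsto> w + x, so the interior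
   of a cone absorbs positive scalings and translations by elements of K; this gives (i) and (ii).
   Everything else rests on one observation: y - v/n converges to y, so an open set containing y
   contains some y - t v with t > 0. For y = 0 and a nonzero v in K this puts -v into K,
   contradicting pointedness, which is (iii). For the converse, given y in the interior and
   v in V, choose t > 0 with y - t v in K; then y = (y - t v) + t v lies in K + V, which is
   contained in V, while V lies in the interior because it is open. *)

lemma conv_add:
  "vs_conv conv \<Longrightarrow> conv x a \<Longrightarrow> conv y b \<Longrightarrow> conv (\<lambda>n. x n + y n) (a + b)"
  unfolding vs_conv_def by blast

lemma conv_scaleR:
  "vs_conv conv \<Longrightarrow> conv x a \<Longrightarrow> conv (\<lambda>n. c *\<^sub>R x n) (c *\<^sub>R a)"
  unfolding vs_conv_def by blast

lemma conv_scaleR_left: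
  "vs_conv conv \<Longrightarrow> l \<longlonglongrightarrow> c \<Longrightarrow> conv (\<lambda>n. l n *\<^sub>R z) (c *\<^sub>R z)"
  unfolding vs_conv_def by blast

lemma conv_const: "vs_conv conv \<Longrightarrow> conv (\<lambda>n. z) z"
  using conv_scaleR_left[of conv "\<lambda>n. 1" 1 z] by simp

lemma conv_openD:
  "conv_open conv U \<Longrightarrow> conv x a \<Longrightarrow> a \<in> U \<Longrightarrow> \<forall>\<^sub>F n in sequentially. x n \<in> U"
  unfolding conv_open_def by blast

lemma conv_interior_subset: "conv_interior conv A \<subseteq> A"
  unfolding conv_interior_def by blast

lemma conv_interior_maximal: "conv_open conv U \<Longrightarrow> U \<subseteq> A \<Longrightarrow> U \<subseteq> conv_interior conv A"
  unfolding conv_interior_def by blast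

lemma conv_open_conv_interior: "conv_open conv (conv_interior conv A)"
  unfolding conv_open_def
proof (intro allI impI)
  fix x a assume x: "conv x a" and "a \<in> conv_interior conv A"
  then obtain U where U: "conv_open conv U" "U \<subseteq> A" "a \<in> U"
    unfolding conv_interior_def by blast
  from conv_openD[OF U(1) x U(3)] show "\<forall>\<^sub>F n in sequentially. x n \<in> conv_interior conv A"
    by eventually_elim (use U conv_interior_maximal in blast)
qed

lemma conv_open_scaleR_image:
  assumes vc: "vs_conv conv" and U: "conv_open conv U" and c: "c \<noteq> 0"
  shows "conv_open conv ((\<lambda>x. c *\<^sub>R x) ` U)"
  unfolding conv_open_def
proof (intro allI impI)
  fix x a assume x: "conv x a" and "a \<in> (\<lambda>x. c *\<^sub>R x) ` U"
  then obtain u where u: "u \<in> U" "a = c *\<^sub>R u" by blast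
  have "conv (\<lambda>n. inverse c *\<^sub>R x n) u"
    using conv_scaleR[OF vc x, of "inverse c"] u c by simp
  from conv_openD[OF U this u(1)] show "\<forall>\<^sub>F n in sequentially. x n \<in> (\<lambda>x. c *\<^sub>R x) ` U"
    by eventually_elim (use c in \<open>auto intro: image_eqI[where x = "inverse c *\<^sub>R _"]\<close>)
qed

lemma conv_open_translation:
  assumes vc: "vs_conv conv" and U: "conv_open conv U"
  shows "conv_open conv ((\<lambda>x. w + x) ` U)"
  unfolding conv_open_def
proof (intro allI impI)
  fix x a assume x: "conv x a" and "a \<in> (\<lambda>x. w + x) ` U"
  then obtain u where u: "u \<in> U" "a = w + u" by blast
  have "conv (\<lambda>n. x n + - w) u"
    using conv_add[OF vc x conv_const[OF vc, of "- w"]] u by simp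
  from conv_openD[OF U this u(1)] show "\<forall>\<^sub>F n in sequentially. x n \<in> (\<lambda>x. w + x) ` U"
    by eventually_elim (auto intro: image_eqI[where x = "_ + - w"])
qed

lemma conv_open_minus_small_scaleR:
  assumes vc: "vs_conv conv" and U: "conv_open conv U" and y: "y \<in> U"
  shows "\<exists>t>0. y - t *\<^sub>R v \<in> U"
proof -
  let ?t = "\<lambda>n. inverse (real (Suc n))"
  have "(\<lambda>n. - ?t n) \<longlonglongrightarrow> 0"
    using tendsto_minus[OF LIMSEQ_inverse_real_of_nat] by simp
  from conv_add[OF vc conv_const[OF vc, of y] conv_scaleR_left[OF vc this, of v]]
  have "conv (\<lambda>n. y + (- ?t n) *\<^sub>R v) (y + 0 *\<^sub>R v)" .
  then have "conv (\<lambda>n. y + (- ?t n) *\<^sub>R v) y"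
    by (simp only: scaleR_zero_left add_0_right)
  from eventually_happens'[OF sequentially_bot conv_openD[OF U this y]]
  obtain n where "y + (- ?t n) *\<^sub>R v \<in> U" ..
  then have "y - ?t n *\<^sub>R v \<in> U" by simp
  then show ?thesis by (intro exI[of _ "?t n"]) simp
qed

lemma scaleR_conv_interior:
  assumes "vs_conv conv" and K: "\<And>x. x \<in> K \<Longrightarrow> c *\<^sub>R x \<in> K" and "c \<noteq> 0"
    and "y \<in> conv_interior conv K"
  shows "c *\<^sub>R y \<in> conv_interior conv K"
proof -
  have "(\<lambda>x. c *\<^sub>R x) ` conv_interior conv K \<subseteq> conv_interior conv K"
    using conv_open_scaleR_image[OF assms(1) conv_open_conv_interior assms(3)]
    by (rule conv_interior_maximal) (use conv_interior_subset[of conv K] K in blast)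
  with assms(4) show ?thesis by blast
qed

lemma add_conv_interior:
  assumes "vs_conv conv" and K: "\<And>y. y \<in> K \<Longrightarrow> x + y \<in> K"
    and "y \<in> conv_interior conv K"
  shows "x + y \<in> conv_interior conv K"
proof -
  have "(\<lambda>y. x + y) ` conv_interior conv K \<subseteq> conv_interior conv K"
    using conv_open_translation[OF assms(1) conv_open_conv_interior]
    by (rule conv_interior_maximal) (use conv_interior_subset[of conv K] K in blast)
  with assms(3) show ?thesis by blast
qed

lemma zero_notin_conv_interior:
  assumes vc: "vs_conv conv"
    and scale: "\<And>c x. c \<ge> 0 \<Longrightarrow> x \<in> K \<Longrightarrow> c *\<^sub>R x \<in> K"
    and pointed: "K \<inter> uminus ` K = {0}" and z: "z \<in> K" "z \<noteq> 0"
  shows "0 \<notin> conv_interior conv K"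
proof
  assume "0 \<in> conv_interior conv K"
  from conv_open_minus_small_scaleR[OF vc conv_open_conv_interior this, where v = z]
  obtain t :: real where "t > 0" "0 - t *\<^sub>R z \<in> conv_interior conv K" by blast
  with conv_interior_subset[of conv K] have t: "t > 0" "- (t *\<^sub>R z) \<in> K" by auto
  then have "- z \<in> K"
    using scale[of "inverse t" "- (t *\<^sub>R z)"] by simp
  then have "z \<in> K \<inter> uminus ` K"
    using z(1) by (auto intro: image_eqI[where x = "- z"])
  with pointed z(2) show False by blast
qed

lemma conv_interior_unique:
  assumes vc: "vs_conv conv" and "conv_open conv V" and "V \<subseteq> K" and "v \<in> V"
    and V_scale: "\<And>c x. c > 0 \<Longrightarrow> x \<in> V \<Longrightarrow> c *\<^sub>R x \<in> V"
    and V_add: "\<And>x y. x \<in> K \<Longrightarrow> y \<in> V \<Longrightarrow> x + y \<in> V"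
  shows "V = conv_interior conv K"
proof
  show "V \<subseteq> conv_interior conv K"
    using assms(2,3) by (rule conv_interior_maximal)
  show "conv_interior conv K \<subseteq> V"
  proof
    fix y assume "y \<in> conv_interior conv K"
    from conv_open_minus_small_scaleR[OF vc conv_open_conv_interior this, where v = v]
    obtain t :: real where "t > 0" "y - t *\<^sub>R v \<in> conv_interior conv K" by blast
    then have "y - t *\<^sub>R v \<in> K" using conv_interior_subset[of conv K] by blast
    with V_add V_scale \<open>v \<in> V\<close> \<open>t > 0\<close> have "(y - t *\<^sub>R v) + t *\<^sub>R v \<in> V" by blast
    then show "y \<in> V" by simp
  qed
qed

theorem theorem3p3:
  fixes conv :: "(nat \<Rightarrow> 'a::real_vector) \<Rightarrow> 'a \<Rightarrow> bool" and K :: "'a set"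
  assumes "vs_conv conv" and "solid_cone conv K"
  shows "(\<forall>c::real. c > 0 \<longrightarrow> (\<lambda>x. c *\<^sub>R x) ` conv_interior conv K \<subseteq> conv_interior conv K)
       \<and> (\<forall>x\<in>K. \<forall>y\<in>conv_interior conv K. x + y \<in> conv_interior conv K)
       \<and> 0 \<notin> conv_interior conv K
       \<and> (\<forall>V. V \<noteq> {} \<and> conv_open conv V \<and> V \<subseteq> K
             \<and> (\<forall>c::real. c > 0 \<longrightarrow> (\<lambda>x. c *\<^sub>R x) ` V \<subseteq> V)
             \<and> (\<forall>x\<in>K. \<forall>y\<in>V. x + y \<in> V)
             \<and> 0 \<notin> V
             \<longrightarrow> V = conv_interior conv K)"
proof -
  have scale: "\<And>c x. c \<ge> 0 \<Longrightarrow> x \<in> K \<Longrightarrow> c *\<^sub>R x \<in> K"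
    and add: "\<And>x y. x \<in> K \<Longrightarrow> y \<in> K \<Longrightarrow> x + y \<in> K"
    and pointed: "K \<inter> uminus ` K = {0}"
    and nontrivial: "\<exists>z\<in>K. z \<noteq> 0"
    using assms(2) unfolding solid_cone_def conv_cone_def by auto
  have "\<forall>c::real. c > 0 \<longrightarrow> (\<lambda>x. c *\<^sub>R x) ` conv_interior conv K \<subseteq> conv_interior conv K"
    using scaleR_conv_interior[OF assms(1)] scale by (auto simp: less_imp_le)
  moreover have "\<forall>x\<in>K. \<forall>y\<in>conv_interior conv K. x + y \<in> conv_interior conv K"
    using add_conv_interior[OF assms(1)] add by blast
  moreover have "0 \<notin> conv_interior conv K"
    using nontrivial zero_notin_conv_interior[OF assms(1) scale pointed] by blast
  moreover have "\<forall>V. V \<noteq> {} \<and> conv_open conv V \<and> V \<subseteq> K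
      \<and> (\<forall>c::real. c > 0 \<longrightarrow> (\<lambda>x. c *\<^sub>R x) ` V \<subseteq> V)
      \<and> (\<forall>x\<in>K. \<forall>y\<in>V. x + y \<in> V) \<and> 0 \<notin> V
      \<longrightarrow> V = conv_interior conv K"
  proof (intro allI impI, elim conjE)
    fix V assume "V \<noteq> {}" and V: "conv_open conv V" "V \<subseteq> K"
      and V_scale: "\<forall>c::real. c > 0 \<longrightarrow> (\<lambda>x. c *\<^sub>R x) ` V \<subseteq> V"
      and V_add: "\<forall>x\<in>K. \<forall>y\<in>V. x + y \<in> V"
    from \<open>V \<noteq> {}\<close> obtain v where "v \<in> V" by blast
    from conv_interior_unique[OF assms(1) V this] V_scale V_add
    show "V = conv_interior conv K" by blast
  qed
  ultimately show ?thesis by blast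
qed

end
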